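(* (a) Let $(A,\widetilde{A})$ be a dual pair of closed operators on a Hilbert space satisfying the common core property with a common core $\mathcal{D}$, where $A$ is dissipative. Then there exist two symmetric operators $S$ and $V\ge0$ with $\mathcal{D}(S)=\mathcal{D}(V)=\mathcal{D}$ such that $A\upharpoonright_{\mathcal{D}}=S+iV$ and $\widetilde{A}\upharpoonright_{\mathcal{D}}=S-iV$. (b) Conversely, let $A$ be a dissipative operator of the form $A=S+iV$, where $S$ and $V\ge0$ are symmetric operators with $\mathcal{D}(A)=\mathcal{D}(S)=\mathcal{D}(V)=:\mathcal{D}$. Define $\widetilde{A}:=S-iV$ with $\mathcal{D}(\widetilde{A})=\mathcal{D}$. Then the closures $(\overline{A},\overline{\widetilde{A}})$ form a dual pair that has the common core property.
   Context: The inner product is antilinear in the first argument. A densely defined operator $B$ is dissipative if $\mathrm{Im}\langle\psi,B\psi\rangle\ge0$ for all $\psi\in\mathcal{D}(B)$. A pair $(A,\widetilde{A})$ of densely defined closable operators is a dual pair if $A\subset\widetilde{A}^*$ (equivalently $\widetilde{A}\subset A^*$). A dual pair of closed operators has the common core property if there is a subspace $\mathcal{D}\subset\mathcal{D}(A)\cap\mathcal{D}(\widetilde{A})$ with $\overline{A\upharpoonright_{\mathcal{D}}}=A$ and $\overline{\widetilde{A}\upharpoonright_{\mathcal{D}}}=\widetilde{A}$. *)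

theory Defs
  imports "HOL-Analysis.Analysis"
begin

class complex_vector = real_vector +
  fixes scaleC :: "complex \<Rightarrow> 'a \<Rightarrow> 'a" (infixr "*\<^sub>C" 75)
  assumes scaleC_add_right: "a *\<^sub>C (x + y) = a *\<^sub>C x + a *\<^sub>C y"
    and scaleC_add_left: "(a + b) *\<^sub>C x = a *\<^sub>C x + b *\<^sub>C x"
    and scaleC_scaleC: "a *\<^sub>C (b *\<^sub>C x) = (a * b) *\<^sub>C x"
    and scaleC_one: "1 *\<^sub>C x = x"
    and scaleC_of_real: "complex_of_real r *\<^sub>C x = r *\<^sub>R x"

class complex_inner = complex_vector + real_normed_vector +
  fixes cinner :: "'a \<Rightarrow> 'a \<Rightarrow> complex"
  assumes cinner_commute: "cinner x y = cnj (cinner y x)"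
    and cinner_add_left: "cinner (x + y) z = cinner x z + cinner y z"
    and cinner_scaleC_left: "cinner (a *\<^sub>C x) y = cnj a * cinner x y"
    and cinner_real: "Im (cinner x x) = 0"
    and cinner_nonneg: "0 \<le> Re (cinner x x)"
    and cinner_eq_zero_iff: "cinner x x = 0 \<longleftrightarrow> x = 0"
    and norm_eq_sqrt_cinner: "norm x = sqrt (Re (cinner x x))"

class chilbert_space = complex_inner + complete_space

text \<open>An operator on H is a linear subspace of H \<times> H that is the graph of a function.\<close>
definition csubspace :: "'a::complex_vector set \<Rightarrow> bool" where
  "csubspace D \<longleftrightarrow> 0 \<in> D \<and> (\<forall>x\<in>D. \<forall>y\<in>D. x + y \<in> D) \<and> (\<forall>c. \<forall>x\<in>D. c *\<^sub>C x \<in> D)"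

definition is_operator :: "('a::complex_vector \<times> 'a) set \<Rightarrow> bool" where
  "is_operator G \<longleftrightarrow> (0, 0) \<in> G
     \<and> (\<forall>x y u v. (x, y) \<in> G \<longrightarrow> (u, v) \<in> G \<longrightarrow> (x + u, y + v) \<in> G)
     \<and> (\<forall>c x y. (x, y) \<in> G \<longrightarrow> (c *\<^sub>C x, c *\<^sub>C y) \<in> G)
     \<and> (\<forall>y. (0, y) \<in> G \<longrightarrow> y = 0)"

definition op_dom :: "('a \<times> 'a) set \<Rightarrow> 'a set" where
  "op_dom G = fst ` G"

definition op_apply :: "('a \<times> 'a) set \<Rightarrow> 'a \<Rightarrow> 'a" where
  "op_apply G x = (THE y. (x, y) \<in> G)"

definition densely_defined :: "('a::complex_inner \<times> 'a) set \<Rightarrow> bool" where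
  "densely_defined G \<longleftrightarrow> is_operator G \<and> closure (op_dom G) = UNIV"

definition closable :: "('a::complex_inner \<times> 'a) set \<Rightarrow> bool" where
  "closable G \<longleftrightarrow> is_operator G \<and> is_operator (closure G)"

definition closed_operator :: "('a::complex_inner \<times> 'a) set \<Rightarrow> bool" where
  "closed_operator G \<longleftrightarrow> is_operator G \<and> closed G"

definition op_adjoint :: "('a::complex_inner \<times> 'a) set \<Rightarrow> ('a \<times> 'a) set" where
  "op_adjoint G = {(y, z). \<forall>(x, w)\<in>G. cinner y w = cinner z x}"

definition op_restrict :: "('a \<times> 'a) set \<Rightarrow> 'a set \<Rightarrow> ('a \<times> 'a) set" where
  "op_restrict G D = {(x, y) \<in> G. x \<in> D}"

definition op_plus :: "('a \<times> 'a) set \<Rightarrow> ('a \<times> 'a) set \<Rightarrow> ('a::complex_vector \<times> 'a) set" where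
  "op_plus S T = {(x, op_apply S x + op_apply T x) | x. x \<in> op_dom S \<and> x \<in> op_dom T}"

definition op_scale :: "complex \<Rightarrow> ('a::complex_vector \<times> 'a) set \<Rightarrow> ('a \<times> 'a) set" where
  "op_scale c T = {(x, c *\<^sub>C y) | x y. (x, y) \<in> T}"

definition dissipative :: "('a::complex_inner \<times> 'a) set \<Rightarrow> bool" where
  "dissipative B \<longleftrightarrow> densely_defined B \<and>
     (\<forall>\<psi>\<in>op_dom B. 0 \<le> Im (cinner \<psi> (op_apply B \<psi>)))"

definition symmetric_op :: "('a::complex_inner \<times> 'a) set \<Rightarrow> bool" where
  "symmetric_op S \<longleftrightarrow> densely_defined S \<and> S \<subseteq> op_adjoint S"

definition nonneg_op :: "('a::complex_inner \<times> 'a) set \<Rightarrow> bool" where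
  "nonneg_op V \<longleftrightarrow> (\<forall>x\<in>op_dom V. Im (cinner x (op_apply V x)) = 0 \<and> 0 \<le> Re (cinner x (op_apply V x)))"

definition dual_pair :: "('a::complex_inner \<times> 'a) set \<Rightarrow> ('a \<times> 'a) set \<Rightarrow> bool" where
  "dual_pair A At \<longleftrightarrow> densely_defined A \<and> densely_defined At \<and> closable A \<and> closable At
     \<and> A \<subseteq> op_adjoint At"

definition common_core :: "('a::complex_inner \<times> 'a) set \<Rightarrow> ('a \<times> 'a) set \<Rightarrow> 'a set \<Rightarrow> bool" where
  "common_core A At D \<longleftrightarrow> csubspace D \<and> D \<subseteq> op_dom A \<inter> op_dom At
     \<and> closure (op_restrict A D) = A \<and> closure (op_restrict At D) = At"

definition common_core_property :: "('a::complex_inner \<times> 'a) set \<Rightarrow> ('a \<times> 'a) set \<Rightarrow> bool" where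
  "common_core_property A At \<longleftrightarrow> closed_operator A \<and> closed_operator At \<and> (\<exists>D. common_core A At D)"

end

theory Submission
  imports Defs
begin

text \<open>(a) On the common core D put S = (A + At)/2 and V = (A - At)/(2i). The duality
\<open>\<langle>y, At x\<rangle> = \<langle>A y, x\<rangle>\<close> on D makes both symmetric, and \<open>\<langle>x, V x\<rangle> = Im \<langle>x, A x\<rangle>\<close>, which is
nonnegative by dissipativity.
(b) Symmetry of S and V gives \<open>S + iV \<subseteq> (S - iV)*\<close>. By continuity of the inner product the
inclusion passes to the closures, and a graph contained in the adjoint of a densely defined
operator is single-valued, so the closures are operators, with D as a common core.\<close>

interpretation complex_vector: vector_space "scaleC :: complex \<Rightarrow> 'a \<Rightarrow> 'a::complex_vector"
  by unfold_locales (simp_all add: scaleC_add_right scaleC_add_left scaleC_scaleC scaleC_one)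

lemma scaleC_combination:
  "a *\<^sub>C x + b *\<^sub>C y + c *\<^sub>C (d *\<^sub>C x + e *\<^sub>C y) = (a + c * d) *\<^sub>C x + (b + c * e) *\<^sub>C (y::'a::complex_vector)"
  by (simp add: complex_vector.scale_right_distrib complex_vector.scale_left_distrib scaleC_scaleC)

lemma cinner_add_right: "cinner x (y + z) = cinner x y + cinner (x::'a::complex_inner) z"
  by (metis cinner_add_left cinner_commute complex_cnj_add)

lemma cinner_scaleC_right: "cinner x (a *\<^sub>C y) = a * cinner (x::'a::complex_inner) y"
  by (metis cinner_commute cinner_scaleC_left complex_cnj_cnj complex_cnj_mult)

lemma cinner_diff_left: "cinner (x - y) z = cinner x z - cinner (y::'a::complex_inner) z"
  by (metis add_diff_cancel_right' cinner_add_left diff_add_cancel)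

lemma cinner_diff_right: "cinner x (y - z) = cinner x y - cinner (x::'a::complex_inner) z"
  by (metis add_diff_cancel_right' cinner_add_right diff_add_cancel)

lemma cinner_zero_left [simp]: "cinner 0 (y::'a::complex_inner) = 0"
  by (metis cinner_diff_left diff_self)

lemma cinner_self_eq_norm: "cinner x x = complex_of_real ((norm (x::'a::complex_inner))\<^sup>2)"
  by (metis cinner_nonneg cinner_real complex_eq_iff norm_eq_sqrt_cinner real_sqrt_pow2
      Im_complex_of_real Re_complex_of_real)

lemma norm_scaleC: "norm (a *\<^sub>C x) = cmod a * norm (x::'a::complex_inner)"
proof -
  have "complex_of_real ((norm (a *\<^sub>C x))\<^sup>2) = cinner (a *\<^sub>C x) (a *\<^sub>C x)"
    by (simp add: cinner_self_eq_norm)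
  also have "\<dots> = (cnj a * a) * cinner x x"
    by (simp add: cinner_scaleC_left cinner_scaleC_right mult.assoc)
  also have "\<dots> = complex_of_real ((cmod a * norm x)\<^sup>2)"
    by (simp only: cinner_self_eq_norm complex_norm_square[of a] mult.commute[of "cnj a" a]
        power_mult_distrib of_real_mult)
  finally have "(norm (a *\<^sub>C x))\<^sup>2 = (cmod a * norm x)\<^sup>2"
    by (rule of_real_eq_iff[THEN iffD1])
  then show ?thesis by (simp add: power2_eq_iff_nonneg)
qed

lemma bounded_linear_scaleC: "bounded_linear (\<lambda>x::'a::complex_inner. a *\<^sub>C x)"
proof
  show "a *\<^sub>C (x + y) = a *\<^sub>C x + a *\<^sub>C y" for x y :: 'a by (rule scaleC_add_right)
  show "a *\<^sub>C (r *\<^sub>R x) = r *\<^sub>R (a *\<^sub>C x)" for r and x :: 'a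
    by (metis scaleC_of_real scaleC_scaleC mult.commute)
  show "\<exists>K. \<forall>x::'a. norm (a *\<^sub>C x) \<le> norm x * K"
    by (rule exI[of _ "cmod a"]) (simp add: norm_scaleC)
qed

lemma cinner_polarization:
  fixes x y :: "'a::complex_inner"
  shows "cinner x y = Complex ((norm (x + y) ^ 2 - norm (x - y) ^ 2) / 4)
                              ((norm (x - \<i> *\<^sub>C y) ^ 2 - norm (x + \<i> *\<^sub>C y) ^ 2) / 4)"
  unfolding cinner_self_eq_norm[THEN arg_cong[where f = Re], simplified, symmetric]
  by (simp add: cinner_add_left cinner_add_right cinner_diff_left cinner_diff_right
      cinner_scaleC_left cinner_scaleC_right cinner_commute[of y x] complex_eq_iff cinner_real)

lemma continuous_on_cinner [continuous_intros]:
  fixes f g :: "'b::topological_space \<Rightarrow> 'a::complex_inner"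
  assumes "continuous_on S f" "continuous_on S g"
  shows "continuous_on S (\<lambda>x. cinner (f x) (g x))"
proof -
  have "continuous_on S (\<lambda>x. \<i> *\<^sub>C g x)"
    using bounded_linear.continuous_on[OF bounded_linear_scaleC assms(2)] .
  then show ?thesis
    unfolding cinner_polarization by (intro continuous_intros assms) auto
qed

definition graph_on :: "'a set \<Rightarrow> ('a \<Rightarrow> 'a) \<Rightarrow> ('a \<times> 'a) set" where
  "graph_on D f = {(x, f x) | x. x \<in> D}"

lemma mem_graph_on [simp]: "(x, y) \<in> graph_on D f \<longleftrightarrow> x \<in> D \<and> y = f x"
  by (auto simp: graph_on_def)

lemma op_dom_graph_on [simp]: "op_dom (graph_on D f) = D"
  by (force simp: op_dom_def graph_on_def)

lemma op_apply_graph_on [simp]: "x \<in> D \<Longrightarrow> op_apply (graph_on D f) x = f x"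
  unfolding op_apply_def by (rule the_equality) auto

lemma graph_on_cong: "(\<And>x. x \<in> D \<Longrightarrow> f x = g x) \<Longrightarrow> graph_on D f = graph_on D g"
  by (auto simp: graph_on_def)

lemma op_scale_graph_on: "op_scale c (graph_on D f) = graph_on D (\<lambda>x. c *\<^sub>C f x)"
  by (auto simp: op_scale_def graph_on_def)

lemma op_plus_graph_on: "op_plus (graph_on D f) (graph_on D g) = graph_on D (\<lambda>x. f x + g x)"
  by (force simp: op_plus_def)

lemma op_domI: "(x, y) \<in> G \<Longrightarrow> x \<in> op_dom G"
  unfolding op_dom_def by (metis fst_conv image_eqI)

lemma op_apply_eq:
  assumes "is_operator G" "(x, y) \<in> G"
  shows "op_apply G x = y"
proof -
  have "y' = y" if "(x, y') \<in> G" for y'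
  proof -
    have "((-1) *\<^sub>C x, (-1) *\<^sub>C y) \<in> G" using assms unfolding is_operator_def by blast
    then have "(x + (-1) *\<^sub>C x, y' + (-1) *\<^sub>C y) \<in> G"
      using assms that unfolding is_operator_def by blast
    then have "(0, y' - y) \<in> G" by (simp add: complex_vector.scale_minus_left scaleC_one)
    then show ?thesis using assms unfolding is_operator_def by auto
  qed
  then show ?thesis unfolding op_apply_def using assms(2) by blast
qed

lemma op_apply_mem: "is_operator G \<Longrightarrow> x \<in> op_dom G \<Longrightarrow> (x, op_apply G x) \<in> G"
  using op_apply_eq unfolding op_dom_def by force

lemma op_restrict_eq_graph_on:
  assumes "is_operator A" "D \<subseteq> op_dom A"
  shows "op_restrict A D = graph_on D (op_apply A)"
proof (rule set_eqI)
  fix p :: "'a \<times> 'a"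
  obtain x y where p: "p = (x, y)" by (cases p)
  show "p \<in> op_restrict A D \<longleftrightarrow> p \<in> graph_on D (op_apply A)"
    unfolding p op_restrict_def mem_graph_on
    using op_apply_eq[OF assms(1), of x y] op_apply_mem[OF assms(1), of x] assms(2) by auto
qed

lemma op_restrict_op_dom: "op_restrict G (op_dom G) = G"
  unfolding op_restrict_def by (auto intro: op_domI)

lemma graph_on_op_apply: "is_operator G \<Longrightarrow> graph_on (op_dom G) (op_apply G) = G"
  by (metis op_restrict_eq_graph_on op_restrict_op_dom subset_refl)

lemma op_apply_add:
  assumes "is_operator G" "x \<in> op_dom G" "u \<in> op_dom G"
  shows "x + u \<in> op_dom G \<and> op_apply G (x + u) = op_apply G x + op_apply G u"
proof -
  have "(x, op_apply G x) \<in> G" "(u, op_apply G u) \<in> G"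
    using assms op_apply_mem by blast+
  then have "(x + u, op_apply G x + op_apply G u) \<in> G"
    using assms(1) unfolding is_operator_def by blast
  then show ?thesis using op_apply_eq[OF assms(1)] op_domI by fastforce
qed

lemma op_apply_scaleC:
  assumes "is_operator G" "x \<in> op_dom G"
  shows "c *\<^sub>C x \<in> op_dom G \<and> op_apply G (c *\<^sub>C x) = c *\<^sub>C op_apply G x"
proof -
  have "(x, op_apply G x) \<in> G"
    using assms op_apply_mem by blast
  then have "(c *\<^sub>C x, c *\<^sub>C op_apply G x) \<in> G"
    using assms(1) unfolding is_operator_def by blast
  then show ?thesis using op_apply_eq[OF assms(1)] op_domI by fastforce
qed

lemma csubspace_op_dom:
  assumes "is_operator G"
  shows "csubspace (op_dom G)"
proof -
  have "(0, 0) \<in> G" using assms unfolding is_operator_def by blast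
  then have "0 \<in> op_dom G" by (rule op_domI)
  then show ?thesis unfolding csubspace_def using op_apply_add[OF assms] op_apply_scaleC[OF assms] by simp
qed

lemma is_operator_graph_on:
  assumes "csubspace D"
    and "\<And>x u. x \<in> D \<Longrightarrow> u \<in> D \<Longrightarrow> f (x + u) = f x + f u"
    and "\<And>c x. x \<in> D \<Longrightarrow> f (c *\<^sub>C x) = c *\<^sub>C f x"
  shows "is_operator (graph_on D f)"
proof -
  have "0 \<in> D" using assms(1) by (simp add: csubspace_def)
  moreover have "f 0 = 0" using assms(3)[OF \<open>0 \<in> D\<close>, of 0] by simp
  ultimately show ?thesis unfolding is_operator_def using assms by (simp add: csubspace_def)
qed

lemma is_operator_combination:
  assumes "csubspace D" "is_operator A" "is_operator B" "D \<subseteq> op_dom A" "D \<subseteq> op_dom B"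
  shows "is_operator (graph_on D (\<lambda>x. a *\<^sub>C op_apply A x + b *\<^sub>C op_apply B x))"
proof (rule is_operator_graph_on[OF assms(1)])
  fix x u assume "x \<in> D" "u \<in> D"
  then have "op_apply A (x + u) = op_apply A x + op_apply A u"
    "op_apply B (x + u) = op_apply B x + op_apply B u"
    using assms(4,5) op_apply_add[OF assms(2), of x u] op_apply_add[OF assms(3), of x u] by auto
  then show "a *\<^sub>C op_apply A (x + u) + b *\<^sub>C op_apply B (x + u) =
      a *\<^sub>C op_apply A x + b *\<^sub>C op_apply B x + (a *\<^sub>C op_apply A u + b *\<^sub>C op_apply B u)"
    by (simp add: scaleC_add_right add_ac)
next
  fix c x assume "x \<in> D"
  then have "op_apply A (c *\<^sub>C x) = c *\<^sub>C op_apply A x" "op_apply B (c *\<^sub>C x) = c *\<^sub>C op_apply B x"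
    using assms(4,5) op_apply_scaleC[OF assms(2), of x c] op_apply_scaleC[OF assms(3), of x c] by auto
  then show "a *\<^sub>C op_apply A (c *\<^sub>C x) + b *\<^sub>C op_apply B (c *\<^sub>C x) =
      c *\<^sub>C (a *\<^sub>C op_apply A x + b *\<^sub>C op_apply B x)"
    by (simp add: scaleC_add_right scaleC_scaleC mult.commute)
qed

section \<open>Adjoints and closures\<close>

lemma op_adjoint_swap:
  assumes "G \<subseteq> op_adjoint H"
  shows "H \<subseteq> op_adjoint G"
proof safe
  fix x w assume "(x, w) \<in> H"
  have "cinner x z = cinner w y" if "(y, z) \<in> G" for y z
  proof -
    have "cinner y w = cinner z x" using assms that \<open>(x, w) \<in> H\<close> unfolding op_adjoint_def by blast
    then show ?thesis by (metis cinner_commute)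
  qed
  then show "(x, w) \<in> op_adjoint G" unfolding op_adjoint_def by blast
qed

lemma cinner_op_apply_adjoint:
  assumes "is_operator A" "is_operator B" "A \<subseteq> op_adjoint B" "y \<in> op_dom A" "x \<in> op_dom B"
  shows "cinner y (op_apply B x) = cinner (op_apply A y) x"
  using assms op_apply_mem[OF assms(1)] op_apply_mem[OF assms(2)] unfolding op_adjoint_def by fast

lemma closure_subset_op_adjoint:
  fixes G H :: "('a::complex_inner \<times> 'a) set"
  assumes "G \<subseteq> op_adjoint H"
  shows "closure G \<subseteq> op_adjoint (closure H)"
proof -
  let ?P = "{((y, z), (x, w)). cinner (y::'a) w = cinner z x}"
  have "closed ?P"
    unfolding case_prod_unfold by (intro closed_Collect_eq continuous_intros)
  moreover have "G \<times> H \<subseteq> ?P" using assms unfolding op_adjoint_def by auto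
  ultimately have "closure G \<times> closure H \<subseteq> ?P"
    by (metis closure_Times closure_minimal)
  then show ?thesis unfolding op_adjoint_def by auto
qed

lemma orthogonal_dense_eq_0:
  fixes y :: "'a::complex_inner"
  assumes "closure E = UNIV" "\<And>x. x \<in> E \<Longrightarrow> cinner y x = 0"
  shows "y = 0"
proof -
  have "closed {x. cinner y x = 0}"
    by (intro closed_Collect_eq continuous_intros)
  then have "closure E \<subseteq> {x. cinner y x = 0}"
    using assms(2) by (intro closure_minimal) auto
  then show ?thesis using assms(1) cinner_eq_zero_iff by auto
qed

lemma is_operator_closure:
  fixes G K :: "('a::complex_inner \<times> 'a) set"
  assumes op: "is_operator G" and adj: "closure G \<subseteq> op_adjoint K"
    and dense: "closure (op_dom K) = UNIV"
  shows "is_operator (closure G)"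
proof -
  let ?add = "\<lambda>((x, y), (u, v)). (x + u, y + v :: 'a)"
  have "?add ` closure (G \<times> G) \<subseteq> closure G"
    using op unfolding is_operator_def case_prod_unfold
    by (intro image_closure_subset continuous_intros) (auto intro: closure_subset[THEN subsetD])
  then have add: "(x + u, y + v) \<in> closure G"
    if "(x, y) \<in> closure G" "(u, v) \<in> closure G" for x y u v
    using that unfolding closure_Times by force
  have scale: "(c *\<^sub>C x, c *\<^sub>C y) \<in> closure G" if "(x, y) \<in> closure G" for c x y
  proof -
    let ?scale = "\<lambda>(x, y). (c *\<^sub>C x, c *\<^sub>C y :: 'a)"
    have "?scale ` closure G \<subseteq> closure G"
      using op unfolding is_operator_def case_prod_unfold
      by (intro image_closure_subset continuous_on_Pair continuous_intros
          bounded_linear.continuous_on[OF bounded_linear_scaleC])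
        (auto intro: closure_subset[THEN subsetD])
    then show ?thesis using that by auto
  qed
  have single_valued: "y = 0" if "(0, y) \<in> closure G" for y
  proof (rule orthogonal_dense_eq_0[OF dense])
    fix x assume "x \<in> op_dom K"
    then obtain w where "(x, w) \<in> K" by (auto simp: op_dom_def)
    with adj that show "cinner y x = 0" unfolding op_adjoint_def by fastforce
  qed
  have "(0, 0) \<in> closure G" using op closure_subset unfolding is_operator_def by blast
  then show ?thesis unfolding is_operator_def using add scale single_valued by blast
qed

lemma op_dom_closure_subset: "op_dom G \<subseteq> op_dom (closure G)"
  unfolding op_dom_def using closure_subset by blast

lemma closure_op_restrict_closure: "closure (op_restrict (closure G) (op_dom G)) = closure G"
proof (rule antisym)
  show "closure (op_restrict (closure G) (op_dom G)) \<subseteq> closure G"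
    by (rule closure_minimal) (auto simp: op_restrict_def)
  show "closure G \<subseteq> closure (op_restrict (closure G) (op_dom G))"
    by (rule closure_mono) (auto simp: op_restrict_def intro: op_domI closure_subset[THEN subsetD])
qed

lemma dense_core:
  assumes "closure (op_restrict A D) = A" "closure (op_dom A) = UNIV"
  shows "closure D = UNIV"
proof -
  have "op_dom A = fst ` closure (op_restrict A D)" using assms(1) by (simp add: op_dom_def)
  also have "\<dots> \<subseteq> closure (fst ` op_restrict A D)"
    by (intro image_closure_subset continuous_intros closure_subset closed_closure)
  also have "\<dots> \<subseteq> closure D" by (rule closure_mono) (auto simp: op_restrict_def)
  finally show ?thesis using assms(2) by (metis closure_closure closure_mono top.extremum_uniqueI)
qed

section \<open>Decomposition of a dual pair\<close>

lemma symmetric_op_combination: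
  assumes "csubspace D" "closure D = UNIV" "is_operator A" "is_operator B"
    "D \<subseteq> op_dom A" "D \<subseteq> op_dom B" "A \<subseteq> op_adjoint B"
  shows "symmetric_op (graph_on D (\<lambda>x. a *\<^sub>C op_apply A x + cnj a *\<^sub>C op_apply B x))"
    (is "symmetric_op (graph_on D ?f)")
proof -
  have "cinner y (?f x) = cinner (?f y) x" if "x \<in> D" "y \<in> D" for x y
  proof -
    have "cinner y (op_apply B x) = cinner (op_apply A y) x"
      using assms that by (intro cinner_op_apply_adjoint) auto
    moreover have "cinner y (op_apply A x) = cinner (op_apply B y) x"
      using assms that op_adjoint_swap[OF assms(7)] by (intro cinner_op_apply_adjoint) auto
    ultimately show ?thesis
      by (simp add: cinner_add_left cinner_add_right cinner_scaleC_left cinner_scaleC_right)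
  qed
  then have "graph_on D ?f \<subseteq> op_adjoint (graph_on D ?f)"
    unfolding op_adjoint_def graph_on_def by auto
  then show ?thesis
    using assms is_operator_combination
    unfolding symmetric_op_def densely_defined_def by auto
qed

lemma dissipative_dual_pair_decomposition:
  fixes A At :: "('a::complex_inner \<times> 'a) set"
  assumes dp: "dual_pair A At" and "closed_operator A" "closed_operator At"
    and core: "common_core A At D" and dis: "dissipative A"
  shows "\<exists>S V. symmetric_op S \<and> symmetric_op V \<and> nonneg_op V
               \<and> op_dom S = D \<and> op_dom V = D
               \<and> op_restrict A D = op_plus S (op_scale \<i> V)
               \<and> op_restrict At D = op_plus S (op_scale (- \<i>) V)"
proof -
  have opA: "is_operator A" and opAt: "is_operator At"
    using assms(2,3) unfolding closed_operator_def by blast+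
  have D: "csubspace D" "D \<subseteq> op_dom A" "D \<subseteq> op_dom At"
    using core unfolding common_core_def by blast+
  have adj: "A \<subseteq> op_adjoint At" using dp by (simp add: dual_pair_def)
  have dense: "closure D = UNIV"
    using core dp dense_core[of A D] unfolding common_core_def dual_pair_def densely_defined_def
    by blast
  let ?combination = "\<lambda>a. graph_on D (\<lambda>x. a *\<^sub>C op_apply A x + cnj a *\<^sub>C op_apply At x)"
  define S where "S = ?combination (1/2)"
  define V where "V = ?combination (- \<i>/2)"
  have symmetric: "symmetric_op S" "symmetric_op V"
    unfolding S_def V_def by (rule symmetric_op_combination[OF D(1) dense opA opAt D(2,3) adj])+
  have "nonneg_op V" unfolding nonneg_op_def
  proof
    fix x assume "x \<in> op_dom V"
    then have x: "x \<in> D" by (simp add: V_def)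
    define z where "z = cinner x (op_apply A x)"
    have "cinner x (op_apply At x) = cinner (op_apply A x) x"
      using x D by (intro cinner_op_apply_adjoint[OF opA opAt adj]) auto
    then have "cinner x (op_apply At x) = cnj z"
      unfolding z_def by (simp add: cinner_commute[of "op_apply A x" x])
    then have "cinner x (op_apply V x) = (- \<i>/2) * z + cnj (- \<i>/2) * cnj z"
      using x by (simp add: V_def z_def cinner_diff_right cinner_scaleC_right)
    also have "\<dots> = complex_of_real (Im z)"
      by (simp add: complex_eq_iff)
    finally have "cinner x (op_apply V x) = complex_of_real (Im z)" .
    moreover have "0 \<le> Im z" using dis x D(2) unfolding dissipative_def z_def by blast
    ultimately show "Im (cinner x (op_apply V x)) = 0 \<and> 0 \<le> Re (cinner x (op_apply V x))"
      by simp
  qed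
  moreover have "op_restrict A D = op_plus S (op_scale \<i> V)"
    "op_restrict At D = op_plus S (op_scale (- \<i>) V)"
    unfolding op_restrict_eq_graph_on[OF opA D(2)] op_restrict_eq_graph_on[OF opAt D(3)]
      S_def V_def op_scale_graph_on op_plus_graph_on scaleC_combination
    by (intro graph_on_cong; simp)+
  ultimately show ?thesis
    using symmetric by (intro exI[of _ S] exI[of _ V]) (simp add: S_def V_def)
qed

section \<open>Dual pairs from a decomposition\<close>

lemma dual_pair_closure_common_core:
  fixes A B :: "('a::complex_inner \<times> 'a) set"
  assumes "is_operator A" "is_operator B" "op_dom A = D" "op_dom B = D" "closure D = UNIV"
    and adj: "A \<subseteq> op_adjoint B"
  shows "dual_pair (closure A) (closure B) \<and> common_core_property (closure A) (closure B)"
proof -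
  have dense: "closure (op_dom (closure A)) = UNIV" "closure (op_dom (closure B)) = UNIV"
    using assms op_dom_closure_subset
    by (metis closure_mono top.extremum_uniqueI)+
  have adj_closure: "closure A \<subseteq> op_adjoint (closure B)" "closure B \<subseteq> op_adjoint (closure A)"
    using closure_subset_op_adjoint[OF adj] closure_subset_op_adjoint[OF op_adjoint_swap[OF adj]]
    by simp_all
  have op_closure: "is_operator (closure A)" "is_operator (closure B)"
    using is_operator_closure[OF assms(1) adj_closure(1) dense(2)]
      is_operator_closure[OF assms(2) adj_closure(2) dense(1)] by simp_all
  have "csubspace D" using csubspace_op_dom[OF assms(1)] unfolding assms(3) .
  moreover have "D \<subseteq> op_dom (closure A)" "D \<subseteq> op_dom (closure B)"
    using op_dom_closure_subset[of A] op_dom_closure_subset[of B] unfolding assms(3,4) .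
  moreover have "closure (op_restrict (closure A) D) = closure A"
    "closure (op_restrict (closure B) D) = closure B"
    using closure_op_restrict_closure[of A] closure_op_restrict_closure[of B] unfolding assms(3,4) .
  ultimately have "common_core (closure A) (closure B) D"
    by (simp only: common_core_def Int_subset_iff)
  moreover have "closable (closure A)" "closable (closure B)"
    "closed_operator (closure A)" "closed_operator (closure B)"
    using op_closure by (simp_all add: closable_def closed_operator_def)
  ultimately show ?thesis
    using op_closure dense adj_closure(1)
    unfolding dual_pair_def densely_defined_def common_core_property_def by blast
qed

lemma op_plus_op_scale_eq_graph_on:
  assumes "is_operator S" "is_operator V" "op_dom S = op_dom V"
  shows "op_plus S (op_scale c V) = graph_on (op_dom S) (\<lambda>x. 1 *\<^sub>C op_apply S x + c *\<^sub>C op_apply V x)"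
proof -
  have "op_plus S (op_scale c V) =
      op_plus (graph_on (op_dom S) (op_apply S)) (op_scale c (graph_on (op_dom S) (op_apply V)))"
    using graph_on_op_apply[OF assms(1)] graph_on_op_apply[OF assms(2)] assms(3) by simp
  then show ?thesis by (simp add: op_plus_graph_on op_scale_graph_on scaleC_one)
qed

lemma decomposition_dual_pair:
  fixes S V :: "('a::complex_inner \<times> 'a) set"
  assumes sS: "symmetric_op S" and sV: "symmetric_op V" and dom: "op_dom S = op_dom V"
    and dis: "dissipative (op_plus S (op_scale \<i> V))"
  shows "dual_pair (closure (op_plus S (op_scale \<i> V))) (closure (op_plus S (op_scale (- \<i>) V)))
         \<and> common_core_property (closure (op_plus S (op_scale \<i> V)))
                                (closure (op_plus S (op_scale (- \<i>) V)))"
proof -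
  define D where "D = op_dom S"
  have opS: "is_operator S" and opV: "is_operator V"
    using sS sV unfolding symmetric_op_def densely_defined_def by blast+
  have D: "csubspace D" "D \<subseteq> op_dom S" "D \<subseteq> op_dom V"
    using csubspace_op_dom[OF opS] dom unfolding D_def by simp_all
  note graph = op_plus_op_scale_eq_graph_on[OF opS opV dom, folded D_def]
  have op: "is_operator (op_plus S (op_scale c V))" for c
    unfolding graph by (rule is_operator_combination[OF D(1) opS opV D(2,3)])
  have dense: "closure D = UNIV"
    using dis unfolding graph dissipative_def densely_defined_def by simp
  have "cinner y (op_apply S x + (- \<i>) *\<^sub>C op_apply V x) =
        cinner (op_apply S y + \<i> *\<^sub>C op_apply V y) x" if "x \<in> D" "y \<in> D" for x y
  proof -
    have "cinner y (op_apply S x) = cinner (op_apply S y) x"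
      "cinner y (op_apply V x) = cinner (op_apply V y) x"
      using that D sS sV unfolding symmetric_op_def
      by (auto intro: cinner_op_apply_adjoint[OF opS opS] cinner_op_apply_adjoint[OF opV opV])
    then show ?thesis
      by (simp add: cinner_add_left cinner_diff_right cinner_scaleC_left cinner_scaleC_right)
  qed
  then have "op_plus S (op_scale \<i> V) \<subseteq> op_adjoint (op_plus S (op_scale (- \<i>) V))"
    unfolding graph op_adjoint_def graph_on_def by auto
  moreover have "op_dom (op_plus S (op_scale c V)) = D" for c
    unfolding graph by simp
  ultimately show ?thesis
    using dense by (intro dual_pair_closure_common_core[OF op op]) simp_all
qed

theorem lemma3p3:
  fixes dummy :: "'a::chilbert_space"
  shows "(\<forall>(A :: ('a \<times> 'a) set) At D.
            dual_pair A At \<and> closed_operator A \<and> closed_operator At \<and> common_core A At D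
            \<and> dissipative A \<longrightarrow>
            (\<exists>S V. symmetric_op S \<and> symmetric_op V \<and> nonneg_op V
               \<and> op_dom S = D \<and> op_dom V = D
               \<and> op_restrict A D = op_plus S (op_scale \<i> V)
               \<and> op_restrict At D = op_plus S (op_scale (- \<i>) V)))
       \<and> (\<forall>(S :: ('a \<times> 'a) set) V.
            symmetric_op S \<and> symmetric_op V \<and> nonneg_op V \<and> op_dom S = op_dom V
            \<and> dissipative (op_plus S (op_scale \<i> V)) \<longrightarrow>
            dual_pair (closure (op_plus S (op_scale \<i> V))) (closure (op_plus S (op_scale (- \<i>) V)))
            \<and> common_core_property (closure (op_plus S (op_scale \<i> V)))
                                   (closure (op_plus S (op_scale (- \<i>) V))))"
  using dissipative_dual_pair_decomposition decomposition_dual_pair by blast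

end
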